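(* For all $n \ge 3$, $\gamma(n) \le 4n - 10$.
   Context: A red-blue colouring of the edges of a complete tripartite graph is good if no two monochromatic triangles share an edge. $\gamma(n)$ is the maximum number of monochromatic triangles in a good red-blue colouring of a complete tripartite graph on $n$ vertices. *)

theory Defs
  imports Main
begin

text \<open>A complete tripartite graph on the vertex set {0..<n}: three nonempty,
pairwise disjoint parts covering the vertex set; edges are exactly the pairs
of vertices in different parts.\<close>
definition tripartition :: "nat \<Rightarrow> nat set \<Rightarrow> nat set \<Rightarrow> nat set \<Rightarrow> bool" where
  "tripartition n A B C \<longleftrightarrow>
     A \<union> B \<union> C = {0..<n} \<and> A \<inter> B = {} \<and> B \<inter> C = {} \<and> A \<inter> C = {} \<and>
     A \<noteq> {} \<and> B \<noteq> {} \<and> C \<noteq> {}"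

text \<open>A red-blue colouring assigns to each edge (a two-element vertex set) a
colour (True = red, False = blue).\<close>
definition mono_triangles :: "nat set \<Rightarrow> nat set \<Rightarrow> nat set \<Rightarrow> (nat set \<Rightarrow> bool) \<Rightarrow> nat set set" where
  "mono_triangles A B C col =
     {{a, b, c} | a b c. a \<in> A \<and> b \<in> B \<and> c \<in> C \<and>
        col {a, b} = col {b, c} \<and> col {b, c} = col {a, c}}"

definition good_colouring :: "nat set \<Rightarrow> nat set \<Rightarrow> nat set \<Rightarrow> (nat set \<Rightarrow> bool) \<Rightarrow> bool" where
  "good_colouring A B C col \<longleftrightarrow>
     (\<forall>T1 \<in> mono_triangles A B C col. \<forall>T2 \<in> mono_triangles A B C col.
        T1 \<noteq> T2 \<longrightarrow> \<not> (\<exists>e. e \<subseteq> T1 \<and> e \<subseteq> T2 \<and> card e = 2))"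

definition gamma :: "nat \<Rightarrow> nat" where
  "gamma n = Max {card (mono_triangles A B C col) | A B C col.
                    tripartition n A B C \<and> good_colouring A B C col}"

end

theory Submission
  imports Defs
begin

(* Fix a colour g. As no two monochromatic triangles share an edge, an edge of a triangle of
   either colour determines that triangle, so the g-triangles through a vertex meet only there.
   Using this for both colours: if v lies in three g-triangles {v, p_i, q_i}, every other vertex
   w in the part of v is g-joined to all p_i or to all q_i. Hence not every vertex lies in three
   g-triangles: take three at a vertex a, say {a, b_i, c_i}, three at c1, and a second one
   {b2, f, h} through b2; the dichotomy at a makes f g-joined to b1, so h is g-joined neither to
   a nor to b1, contradicting the dichotomy at c1. Deleting a vertex in at most two g-triangles
   and inducting on the number N of vertices (base case: three singleton parts) bounds the
   g-triangles by 2N - 5; adding both colours gives 4N - 10. *)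

definition colour_triangles ::
    "nat set \<Rightarrow> nat set \<Rightarrow> nat set \<Rightarrow> (nat set \<Rightarrow> bool) \<Rightarrow> bool \<Rightarrow> nat set set" where
  "colour_triangles A B C col g = {{a, b, c} | a b c. a \<in> A \<and> b \<in> B \<and> c \<in> C \<and>
     col {a, b} = g \<and> col {b, c} = g \<and> col {a, c} = g}"

definition colour_degree ::
    "nat set \<Rightarrow> nat set \<Rightarrow> nat set \<Rightarrow> (nat set \<Rightarrow> bool) \<Rightarrow> bool \<Rightarrow> nat \<Rightarrow> nat" where
  "colour_degree A B C col g v = card {T \<in> colour_triangles A B C col g. v \<in> T}"

definition good_tripartite :: "nat set \<Rightarrow> nat set \<Rightarrow> nat set \<Rightarrow> (nat set \<Rightarrow> bool) \<Rightarrow> bool" where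
  "good_tripartite A B C col \<longleftrightarrow>
     A \<inter> B = {} \<and> B \<inter> C = {} \<and> A \<inter> C = {} \<and> good_colouring A B C col"

lemma colour_trianglesI:
  "a \<in> A \<Longrightarrow> b \<in> B \<Longrightarrow> c \<in> C \<Longrightarrow> col {a, b} = g \<Longrightarrow> col {b, c} = g \<Longrightarrow> col {a, c} = g
    \<Longrightarrow> {a, b, c} \<in> colour_triangles A B C col g"
  unfolding colour_triangles_def by blast

lemma colour_trianglesE:
  assumes "T \<in> colour_triangles A B C col g"
  obtains a b c where "T = {a, b, c}" "a \<in> A" "b \<in> B" "c \<in> C"
    "col {a, b} = g" "col {b, c} = g" "col {a, c} = g"
  using assms unfolding colour_triangles_def by blast

lemma mono_trianglesI:
  "a \<in> A \<Longrightarrow> b \<in> B \<Longrightarrow> c \<in> C \<Longrightarrow> col {a, b} = col {b, c} \<Longrightarrow> col {b, c} = col {a, c}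
    \<Longrightarrow> {a, b, c} \<in> mono_triangles A B C col"
  unfolding mono_triangles_def by blast

lemma mono_triangles_eq_UN: "mono_triangles A B C col = (\<Union>g. colour_triangles A B C col g)"
  unfolding mono_triangles_def colour_triangles_def by blast

lemma mono_triangles_eq_Un:
  "mono_triangles A B C col = colour_triangles A B C col True \<union> colour_triangles A B C col False"
  by (simp add: mono_triangles_eq_UN UNIV_bool Un_commute)

lemma mono_triangles_swap12: "mono_triangles B A C col = mono_triangles A B C col"
  unfolding mono_triangles_def
  by (intro Collect_cong iffI; elim exE conjE;
      rule_tac x=b in exI, rule_tac x=a in exI, rule_tac x=c in exI; simp add: insert_commute)

lemma mono_triangles_swap23: "mono_triangles A C B col = mono_triangles A B C col"
  unfolding mono_triangles_def
  by (intro Collect_cong iffI; elim exE conjE;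
      rule_tac x=a in exI, rule_tac x=c in exI, rule_tac x=b in exI; simp add: insert_commute)

lemma colour_triangles_swap12: "colour_triangles B A C col g = colour_triangles A B C col g"
  unfolding colour_triangles_def
  by (intro Collect_cong iffI; elim exE conjE;
      rule_tac x=b in exI, rule_tac x=a in exI, rule_tac x=c in exI; simp add: insert_commute)

lemma colour_triangles_swap23: "colour_triangles A C B col g = colour_triangles A B C col g"
  unfolding colour_triangles_def
  by (intro Collect_cong iffI; elim exE conjE;
      rule_tac x=a in exI, rule_tac x=c in exI, rule_tac x=b in exI; simp add: insert_commute)

lemma colour_triangles_rotate: "colour_triangles C A B col g = colour_triangles A B C col g"
  by (rule trans[OF colour_triangles_swap12 colour_triangles_swap23])

lemma colour_degree_swap12: "colour_degree B A C col g v = colour_degree A B C col g v"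
  unfolding colour_degree_def by (simp only: colour_triangles_swap12)

lemma colour_degree_rotate: "colour_degree C A B col g v = colour_degree A B C col g v"
  unfolding colour_degree_def by (simp only: colour_triangles_rotate)

lemma good_colouring_swap12: "good_colouring B A C col = good_colouring A B C col"
  unfolding good_colouring_def by (simp only: mono_triangles_swap12)

lemma good_colouring_swap23: "good_colouring A C B col = good_colouring A B C col"
  unfolding good_colouring_def by (simp only: mono_triangles_swap23)

lemma good_tripartite_swap12: "good_tripartite A B C col \<Longrightarrow> good_tripartite B A C col"
  using good_colouring_swap12[of A B C col] unfolding good_tripartite_def by blast

lemma good_tripartite_swap23: "good_tripartite A B C col \<Longrightarrow> good_tripartite A C B col"
  using good_colouring_swap23[of A B C col] unfolding good_tripartite_def by blast

lemma good_tripartite_rotate: "good_tripartite A B C col \<Longrightarrow> good_tripartite C A B col"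
  by (rule good_tripartite_swap12[OF good_tripartite_swap23])

lemma good_tripartite_apex_unique:
  assumes good: "good_tripartite X Y Z col"
    and "x \<in> X" "y \<in> Y" "z \<in> Z" "z' \<in> Z"
    and "col {x, y} = h" "col {x, z} = h" "col {y, z} = h" "col {x, z'} = h" "col {y, z'} = h"
  shows "z = z'"
proof (rule ccontr)
  assume "z \<noteq> z'"
  have disj: "X \<inter> Y = {}" "Y \<inter> Z = {}" "X \<inter> Z = {}" and col: "good_colouring X Y Z col"
    using good unfolding good_tripartite_def by auto
  have "x \<noteq> y" "x \<noteq> z" "y \<noteq> z"
    using assms disj by auto
  have T: "{x, y, z} \<in> mono_triangles X Y Z col"
    by (rule mono_trianglesI) (use assms in simp_all)
  have T': "{x, y, z'} \<in> mono_triangles X Y Z col"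
    by (rule mono_trianglesI) (use assms in simp_all)
  have "z \<notin> {x, y, z'}"
    using \<open>x \<noteq> z\<close> \<open>y \<noteq> z\<close> \<open>z \<noteq> z'\<close> by simp
  then have "{x, y, z} \<noteq> {x, y, z'}"
    by (metis insertCI)
  from col[unfolded good_colouring_def, rule_format, OF T T' this]
  have "\<not> (\<exists>e. e \<subseteq> {x, y, z} \<and> e \<subseteq> {x, y, z'} \<and> card e = 2)" .
  moreover have "{x, y} \<subseteq> {x, y, z}" "{x, y} \<subseteq> {x, y, z'}" "card {x, y} = 2"
    using \<open>x \<noteq> y\<close> by auto
  ultimately show False
    by blast
qed

lemma colour_triangle_through:
  assumes good: "good_tripartite X Y Z col" and "v \<in> X"
    and "T \<in> colour_triangles X Y Z col g" "v \<in> T"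
  obtains y z where "y \<in> Y" "z \<in> Z" "T = {v, y, z}"
    "col {v, y} = g" "col {y, z} = g" "col {v, z} = g"
proof -
  from assms(3) obtain a b c where T: "T = {a, b, c}" "a \<in> X" "b \<in> Y" "c \<in> Z"
    "col {a, b} = g" "col {b, c} = g" "col {a, c} = g"
    by (rule colour_trianglesE)
  have "v = a"
    using assms T good unfolding good_tripartite_def by blast
  then show thesis
    using T that by blast
qed

lemma distinct_triangles_through_vertex:
  assumes good: "good_tripartite X Y Z col" and "v \<in> X"
    and "y \<in> Y" "y' \<in> Y" "z \<in> Z" "z' \<in> Z" and "{v, y, z} \<noteq> {v, y', z'}"
    and "col {v, y} = g" "col {y, z} = g" "col {v, z} = g"
    and "col {v, y'} = g" "col {y', z'} = g" "col {v, z'} = g"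
  shows "y \<noteq> y' \<and> z \<noteq> z'"
proof (intro conjI notI)
  assume "y = y'"
  then have "z = z'"
    using good_tripartite_apex_unique[OF good, of v y z z' g] assms by simp
  with \<open>y = y'\<close> show False
    using assms by simp
next
  assume "z = z'"
  then have "y = y'"
    using good_tripartite_apex_unique[OF good_tripartite_swap23[OF good], of v z y y' g] assms
    by (simp add: insert_commute)
  with \<open>z = z'\<close> show False
    using assms by simp
qed

definition triangle_fan :: "(nat set \<Rightarrow> bool) \<Rightarrow> bool \<Rightarrow> nat \<Rightarrow> nat list \<Rightarrow> nat list \<Rightarrow> bool" where
  "triangle_fan col g v ys zs \<longleftrightarrow> distinct ys \<and> distinct zs \<and>
     list_all2 (\<lambda>y z. col {v, y} = g \<and> col {y, z} = g \<and> col {v, z} = g) ys zs"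

lemma obtain_two_distinct_others:
  assumes "3 \<le> card S" "x \<in> S"
  obtains y z where "y \<in> S" "z \<in> S" "x \<noteq> y" "x \<noteq> z" "y \<noteq> z"
proof -
  have "2 \<le> card (S - {x})"
    using assms by (simp add: card_Diff_singleton_if)
  then obtain U where "U \<subseteq> S - {x}" "card U = 2"
    by (meson obtain_subset_with_card_n)
  moreover from \<open>card U = 2\<close> obtain y z where "U = {y, z}" "y \<noteq> z"
    unfolding card_2_iff by blast
  ultimately show thesis
    using that by blast
qed

lemma triangle_fan_at_vertex:
  assumes good: "good_tripartite X Y Z col" and v: "v \<in> X"
    and deg: "3 \<le> colour_degree X Y Z col g v"
    and y0: "y0 \<in> Y" and z0: "z0 \<in> Z"
    and T0: "col {v, y0} = g" "col {y0, z0} = g" "col {v, z0} = g"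
  obtains y1 y2 z1 z2 where "{y1, y2} \<subseteq> Y" "{z1, z2} \<subseteq> Z"
    "triangle_fan col g v [y0, y1, y2] [z0, z1, z2]"
proof -
  let ?S = "{T \<in> colour_triangles X Y Z col g. v \<in> T}"
  have "{v, y0, z0} \<in> ?S"
    using v y0 z0 T0 by (auto intro: colour_trianglesI)
  with deg obtain T1 T2
    where T: "T1 \<in> ?S" "T2 \<in> ?S" "{v, y0, z0} \<noteq> T1" "{v, y0, z0} \<noteq> T2" "T1 \<noteq> T2"
    unfolding colour_degree_def by (rule obtain_two_distinct_others)
  obtain y1 z1 where T1: "y1 \<in> Y" "z1 \<in> Z" "T1 = {v, y1, z1}"
      "col {v, y1} = g" "col {y1, z1} = g" "col {v, z1} = g"
    using colour_triangle_through[OF good v] T(1) by blast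
  obtain y2 z2 where T2: "y2 \<in> Y" "z2 \<in> Z" "T2 = {v, y2, z2}"
      "col {v, y2} = g" "col {y2, z2} = g" "col {v, z2} = g"
    using colour_triangle_through[OF good v] T(2) by blast
  have "y0 \<noteq> y1 \<and> z0 \<noteq> z1" "y0 \<noteq> y2 \<and> z0 \<noteq> z2" "y1 \<noteq> y2 \<and> z1 \<noteq> z2"
    using distinct_triangles_through_vertex[OF good v] y0 z0 T0 T1 T2 T(3-5) by simp_all
  then have "triangle_fan col g v [y0, y1, y2] [z0, z1, z2]"
    unfolding triangle_fan_def using T0 T1 T2 by auto
  then show thesis
    using that T1 T2 by blast
qed

text \<open>The edges from p to q' and q'' are not g, since {v, p, q} already covers v p; so if
  w were joined to p, q', q'' in the other colour, the edge w p would carry two triangles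
  of that colour.\<close>

lemma good_tripartite_joined_to_one_of_three:
  assumes good: "good_tripartite X Y Z col" and v: "v \<in> X" and w: "w \<in> X"
    and p: "p \<in> Y" and q: "q \<in> Z" "q' \<in> Z" "q'' \<in> Z" and "q' \<noteq> q" "q'' \<noteq> q" "q' \<noteq> q''"
    and "col {v, p} = g" "col {p, q} = g" "col {v, q} = g" "col {v, q'} = g" "col {v, q''} = g"
  shows "col {w, p} = g \<or> col {w, q'} = g \<or> col {w, q''} = g"
proof (rule ccontr)
  assume "\<not> ?thesis"
  then have w_other: "col {w, p} = (\<not> g)" "col {w, q'} = (\<not> g)" "col {w, q''} = (\<not> g)"
    by auto
  have "col {p, q'} = (\<not> g)" "col {p, q''} = (\<not> g)"
    using good_tripartite_apex_unique[OF good v p q(1) q(2), of g]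
      good_tripartite_apex_unique[OF good v p q(1) q(3), of g] assms by auto
  then have "q' = q''"
    using good_tripartite_apex_unique[OF good w p q(2) q(3), of "\<not> g"] w_other by simp
  with \<open>q' \<noteq> q''\<close> show False ..
qed

lemma triangle_fan_neighbour_dichotomy:
  assumes good: "good_tripartite X Y Z col" and v: "v \<in> X" and w: "w \<in> X" "w \<noteq> v"
    and Y: "{p1, p2, p3} \<subseteq> Y" and Z: "{q1, q2, q3} \<subseteq> Z"
    and fan: "triangle_fan col g v [p1, p2, p3] [q1, q2, q3]"
  shows "(\<forall>p \<in> {p1, p2, p3}. col {w, p} = g) \<or> (\<forall>q \<in> {q1, q2, q3}. col {w, q} = g)"
proof -
  have good_XZY: "good_tripartite X Z Y col"
    using good by (rule good_tripartite_swap23)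
  from fan have dist: "p1 \<noteq> p2" "p1 \<noteq> p3" "p2 \<noteq> p3" "q1 \<noteq> q2" "q1 \<noteq> q3" "q2 \<noteq> q3"
    and tri: "col {v, p1} = g" "col {p1, q1} = g" "col {v, q1} = g"
      "col {v, p2} = g" "col {p2, q2} = g" "col {v, q2} = g"
      "col {v, p3} = g" "col {p3, q3} = g" "col {v, q3} = g"
    unfolding triangle_fan_def by auto
  have not_both: "\<not> (col {w, p} = g \<and> col {w, q} = g)"
    if "p \<in> Y" "q \<in> Z" "col {v, p} = g" "col {p, q} = g" "col {v, q} = g" for p q
    using good_tripartite_apex_unique[OF good_tripartite_rotate[OF good_tripartite_rotate[OF good]]
        that(1,2) w(1) v, of g]
      that w(2) by (auto simp: insert_commute)
  have "col {w, p1} = g \<or> col {w, q2} = g \<or> col {w, q3} = g"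
    by (rule good_tripartite_joined_to_one_of_three[OF good v w(1), where q = q1])
      (use Y Z dist tri in auto)
  moreover have "col {w, p2} = g \<or> col {w, q1} = g \<or> col {w, q3} = g"
    by (rule good_tripartite_joined_to_one_of_three[OF good v w(1), where q = q2])
      (use Y Z dist tri in auto)
  moreover have "col {w, p3} = g \<or> col {w, q1} = g \<or> col {w, q2} = g"
    by (rule good_tripartite_joined_to_one_of_three[OF good v w(1), where q = q3])
      (use Y Z dist tri in auto)
  moreover have "col {w, q1} = g \<or> col {w, p2} = g \<or> col {w, p3} = g"
    by (rule good_tripartite_joined_to_one_of_three[OF good_XZY v w(1), where q = p1])
      (use Y Z dist tri in \<open>auto simp: insert_commute\<close>)
  moreover have "col {w, q2} = g \<or> col {w, p1} = g \<or> col {w, p3} = g"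
    by (rule good_tripartite_joined_to_one_of_three[OF good_XZY v w(1), where q = p2])
      (use Y Z dist tri in \<open>auto simp: insert_commute\<close>)
  moreover have "col {w, q3} = g \<or> col {w, p1} = g \<or> col {w, p2} = g"
    by (rule good_tripartite_joined_to_one_of_three[OF good_XZY v w(1), where q = p3])
      (use Y Z dist tri in \<open>auto simp: insert_commute\<close>)
  moreover have "\<not> (col {w, p1} = g \<and> col {w, q1} = g)" "\<not> (col {w, p2} = g \<and> col {w, q2} = g)"
    "\<not> (col {w, p3} = g \<and> col {w, q3} = g)"
    using not_both Y Z tri by auto
  ultimately show ?thesis
    by auto
qed

lemma colour_triangle_at_vertex:
  assumes good: "good_tripartite X Y Z col" and v: "v \<in> X"
    and "colour_degree X Y Z col g v \<noteq> 0"
  obtains y z where "y \<in> Y" "z \<in> Z" "col {v, y} = g" "col {y, z} = g" "col {v, z} = g"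
proof -
  have "{T \<in> colour_triangles X Y Z col g. v \<in> T} \<noteq> {}"
    using assms(3) unfolding colour_degree_def by (metis card.empty)
  then obtain T where "T \<in> colour_triangles X Y Z col g" "v \<in> T"
    by blast
  then show thesis
    using colour_triangle_through[OF good v] that by blast
qed

lemma triangle_fan_second_triangle:
  assumes good: "good_tripartite A B C col" and a: "a \<in> A"
    and B: "{b1, b2, b3} \<subseteq> B" and C: "{c1, c2, c3} \<subseteq> C"
    and fan: "triangle_fan col g a [b1, b2, b3] [c1, c2, c3]"
    and f: "f \<in> A" "f \<noteq> a" and h: "h \<in> C" "h \<noteq> c2"
    and V: "col {b2, f} = g" "col {f, h} = g" "col {b2, h} = g"
  shows "col {a, h} \<noteq> g \<and> col {b1, h} \<noteq> g"
proof
  from fan have T2: "col {a, b2} = g" "col {b2, c2} = g" "col {a, c2} = g"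
    unfolding triangle_fan_def by auto
  show "col {a, h} \<noteq> g"
    using good_tripartite_apex_unique[OF good a _ h(1) _, of b2 c2 g] B C T2 V h(2)
    by (auto simp: insert_commute)
  have "col {f, c2} \<noteq> g"
    using good_tripartite_apex_unique[OF good_tripartite_rotate[OF good_tripartite_rotate[OF good]]
        _ _ f(1) a, of b2 c2 g]
      B C T2 V f(2) by (auto simp: insert_commute)
  then have "col {f, b1} = g"
    using triangle_fan_neighbour_dichotomy[OF good a f(1,2) B C fan] by auto
  then show "col {b1, h} \<noteq> g"
    using good_tripartite_apex_unique[OF good_tripartite_swap23[OF good] f(1) h(1), of b1 b2 g]
      B V fan unfolding triangle_fan_def by (auto simp: insert_commute)
qed

lemma colour_degrees_not_all_ge_3:
  assumes good: "good_tripartite A B C col" and a: "a \<in> A"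
    and deg: "\<And>v. v \<in> A \<union> B \<union> C \<Longrightarrow> 3 \<le> colour_degree A B C col g v"
  shows False
proof -
  have good_CAB: "good_tripartite C A B col"
    using good by (rule good_tripartite_rotate)
  have "colour_degree A B C col g a \<noteq> 0"
    using deg[of a] a by simp
  then obtain b1 c1 where b1: "b1 \<in> B" and c1: "c1 \<in> C"
    and T1: "col {a, b1} = g" "col {b1, c1} = g" "col {a, c1} = g"
    by (rule colour_triangle_at_vertex[OF good a])
  obtain b2 b3 c2 c3 where "{b2, b3} \<subseteq> B" "{c2, c3} \<subseteq> C"
    and fan_a: "triangle_fan col g a [b1, b2, b3] [c1, c2, c3]"
    using triangle_fan_at_vertex[OF good a deg b1 c1 T1] a by blast
  then have B: "{b1, b2, b3} \<subseteq> B" and C: "{c1, c2, c3} \<subseteq> C"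
    using b1 c1 by auto
  have "3 \<le> colour_degree B A C col g b2"
    using deg[of b2] B by (simp add: colour_degree_swap12)
  moreover have "col {b2, a} = g" "col {a, c2} = g" "col {b2, c2} = g"
    using fan_a unfolding triangle_fan_def by (auto simp: insert_commute)
  ultimately obtain f f' h h' where "{f, f'} \<subseteq> A" "{h, h'} \<subseteq> C"
    and fan_b2: "triangle_fan col g b2 [a, f, f'] [c2, h, h']"
    using triangle_fan_at_vertex[OF good_tripartite_swap12[OF good], of b2 g a c2] B C a by blast
  then have "f \<in> A" "h \<in> C" "f \<noteq> a" "h \<noteq> c2" "col {b2, f} = g" "col {f, h} = g" "col {b2, h} = g"
    unfolding triangle_fan_def by auto
  then have ah: "col {a, h} \<noteq> g" and b1h: "col {b1, h} \<noteq> g"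
    using triangle_fan_second_triangle[OF good a B C fan_a] by blast+
  then have "h \<noteq> c1"
    using T1 by auto
  have "3 \<le> colour_degree C A B col g c1"
    using deg[of c1] c1 by (simp add: colour_degree_rotate)
  moreover have "col {c1, a} = g" "col {a, b1} = g" "col {c1, b1} = g"
    using T1 by (simp_all add: insert_commute)
  ultimately obtain x2 x3 y2 y3 where "{x2, x3} \<subseteq> A" "{y2, y3} \<subseteq> B"
    and fan_c1: "triangle_fan col g c1 [a, x2, x3] [b1, y2, y3]"
    by (rule triangle_fan_at_vertex[OF good_CAB c1 _ a b1])
  then show False
    using triangle_fan_neighbour_dichotomy[OF good_CAB c1 \<open>h \<in> C\<close> \<open>h \<noteq> c1\<close> _ _ fan_c1] a b1 ah b1h
    by (auto simp: insert_commute)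
qed

lemma exists_low_colour_degree:
  assumes good: "good_tripartite A B C col" and "A \<noteq> {}"
  shows "\<exists>v \<in> A \<union> B \<union> C. colour_degree A B C col g v \<le> 2"
proof (rule ccontr)
  assume no_low: "\<not> ?thesis"
  obtain a where "a \<in> A"
    using \<open>A \<noteq> {}\<close> by blast
  moreover have "3 \<le> colour_degree A B C col g v" if "v \<in> A \<union> B \<union> C" for v
  proof (rule ccontr)
    assume "\<not> 3 \<le> colour_degree A B C col g v"
    then have "colour_degree A B C col g v \<le> 2"
      by simp
    with that no_low show False
      by (meson bexI)
  qed
  ultimately show False
    by (rule colour_degrees_not_all_ge_3[OF good])
qed

lemma colour_triangles_subset_image:
  "colour_triangles A B C col g \<subseteq> (\<lambda>(a, b, c). {a, b, c}) ` (A \<times> B \<times> C)"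
  by (auto elim!: colour_trianglesE)

lemma card_colour_triangles_le:
  assumes "finite A" "finite B" "finite C"
  shows "card (colour_triangles A B C col g) \<le> card A * card B * card C"
proof -
  have "card (colour_triangles A B C col g) \<le> card ((\<lambda>(a, b, c). {a, b, c}) ` (A \<times> B \<times> C))"
    using assms by (intro card_mono colour_triangles_subset_image) auto
  also have "\<dots> \<le> card (A \<times> B \<times> C)"
    by (rule card_image_le) (use assms in auto)
  finally show ?thesis
    by (simp add: card_cartesian_product)
qed

lemma colour_triangles_Diff_vertex:
  "colour_triangles (A - {v}) (B - {v}) (C - {v}) col g = {T \<in> colour_triangles A B C col g. v \<notin> T}"
  by (auto elim!: colour_trianglesE intro!: colour_trianglesI)

lemma card_colour_triangles_split_vertex:
  assumes "finite A" "finite B" "finite C"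
  shows "card (colour_triangles A B C col g) =
    colour_degree A B C col g v + card (colour_triangles (A - {v}) (B - {v}) (C - {v}) col g)"
proof -
  let ?S = "colour_triangles A B C col g"
  have "finite ?S"
    using assms by (intro finite_subset[OF colour_triangles_subset_image]) auto
  have "card ?S = card ({T \<in> ?S. v \<in> T} \<union> {T \<in> ?S. v \<notin> T})"
    by (rule arg_cong[where f = card]) blast
  also have "\<dots> = card {T \<in> ?S. v \<in> T} + card {T \<in> ?S. v \<notin> T}"
    by (rule card_Un_disjoint) (use \<open>finite ?S\<close> in auto)
  finally show ?thesis
    unfolding colour_degree_def colour_triangles_Diff_vertex .
qed

lemma mono_triangles_mono:
  assumes "A' \<subseteq> A" "B' \<subseteq> B" "C' \<subseteq> C"
  shows "mono_triangles A' B' C' col \<subseteq> mono_triangles A B C col"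
proof
  fix T
  assume "T \<in> mono_triangles A' B' C' col"
  then obtain a b c where "T = {a, b, c}" "a \<in> A'" "b \<in> B'" "c \<in> C'"
    "col {a, b} = col {b, c}" "col {b, c} = col {a, c}"
    unfolding mono_triangles_def by blast
  then show "T \<in> mono_triangles A B C col"
    using assms by (auto intro: mono_trianglesI)
qed

lemma good_colouring_subset:
  assumes "good_colouring A B C col" "A' \<subseteq> A" "B' \<subseteq> B" "C' \<subseteq> C"
  shows "good_colouring A' B' C' col"
  unfolding good_colouring_def
proof (intro ballI impI)
  fix T1 T2
  assume "T1 \<in> mono_triangles A' B' C' col" "T2 \<in> mono_triangles A' B' C' col" "T1 \<noteq> T2"
  then show "\<not> (\<exists>e. e \<subseteq> T1 \<and> e \<subseteq> T2 \<and> card e = 2)"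
    using assms(1) mono_triangles_mono[OF assms(2-4)] unfolding good_colouring_def by (meson subsetD)
qed

lemma good_tripartite_subset:
  assumes "good_tripartite A B C col" "A' \<subseteq> A" "B' \<subseteq> B" "C' \<subseteq> C"
  shows "good_tripartite A' B' C' col"
proof -
  have "A' \<inter> B' = {}" "B' \<inter> C' = {}" "A' \<inter> C' = {}"
    using assms unfolding good_tripartite_def by blast+
  moreover have "good_colouring A' B' C' col"
    using assms good_colouring_subset unfolding good_tripartite_def by blast
  ultimately show ?thesis
    unfolding good_tripartite_def by blast
qed

lemma card_colour_triangles_bound:
  assumes "finite A" "finite B" "finite C" "good_tripartite A B C col"
    and "A \<noteq> {}" "B \<noteq> {}" "C \<noteq> {}"
  shows "card (colour_triangles A B C col g) + 5 \<le> 2 * card (A \<union> B \<union> C)"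
  using assms
proof (induction "card (A \<union> B \<union> C)" arbitrary: A B C rule: less_induct)
  case less
  let ?N = "card (A \<union> B \<union> C)" and ?S = "colour_triangles A B C col g"
  have N: "?N = card A + card B + card C"
    using less.prems unfolding good_tripartite_def
    by (simp add: card_Un_disjoint Int_Un_distrib2)
  have "card A \<ge> 1" "card B \<ge> 1" "card C \<ge> 1"
    using less.prems by (simp_all add: Suc_le_eq card_gt_0_iff)
  show ?case
  proof (cases "card A = 1 \<and> card B = 1 \<and> card C = 1")
    case True
    then show ?thesis
      using card_colour_triangles_le[of A B C col g] less.prems N by simp
  next
    case False
    with N \<open>card A \<ge> 1\<close> \<open>card B \<ge> 1\<close> \<open>card C \<ge> 1\<close> have "?N \<ge> 4"
      by linarith
    obtain v where v: "v \<in> A \<union> B \<union> C" "colour_degree A B C col g v \<le> 2"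
      using exists_low_colour_degree[OF less.prems(4,5)] by blast
    let ?S' = "colour_triangles (A - {v}) (B - {v}) (C - {v}) col g"
    have split: "card ?S = colour_degree A B C col g v + card ?S'"
      using less.prems(1-3) by (rule card_colour_triangles_split_vertex)
    show ?thesis
    proof (cases "A - {v} = {} \<or> B - {v} = {} \<or> C - {v} = {}")
      case True
      then have "?S' = {}"
        by (auto elim: colour_trianglesE)
      then show ?thesis
        using split v(2) \<open>?N \<ge> 4\<close> by simp
    next
      case False
      have N': "card ((A - {v}) \<union> (B - {v}) \<union> (C - {v})) = ?N - 1"
        using v(1) less.prems(1-3) by (simp add: Un_Diff[symmetric] card_Diff_singleton)
      have "card ?S' + 5 \<le> 2 * card ((A - {v}) \<union> (B - {v}) \<union> (C - {v}))"
      proof (rule less.hyps)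
        show "good_tripartite (A - {v}) (B - {v}) (C - {v}) col"
          using less.prems(4) by (rule good_tripartite_subset) auto
      qed (use N' \<open>?N \<ge> 4\<close> less.prems False in auto)
      then show ?thesis
        using split v(2) N' \<open>?N \<ge> 4\<close> by linarith
    qed
  qed
qed

lemma card_mono_triangles_bound:
  assumes "tripartition n A B C" "good_colouring A B C col"
  shows "card (mono_triangles A B C col) + 10 \<le> 4 * n"
proof -
  have parts: "A \<union> B \<union> C = {0..<n}" "A \<noteq> {}" "B \<noteq> {}" "C \<noteq> {}"
    using assms(1) unfolding tripartition_def by auto
  then have fin: "finite A" "finite B" "finite C"
    by (metis finite_Un finite_atLeastLessThan)+
  have good: "good_tripartite A B C col"
    using assms unfolding tripartition_def good_tripartite_def by simp
  have colour_bound: "card (colour_triangles A B C col g) + 5 \<le> 2 * n" for g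
    using card_colour_triangles_bound[OF fin good parts(2-4), of g] parts(1) by simp
  have "card (mono_triangles A B C col)
      \<le> card (colour_triangles A B C col True) + card (colour_triangles A B C col False)"
    unfolding mono_triangles_eq_Un by (rule card_Un_le)
  with colour_bound[of True] colour_bound[of False] show ?thesis
    by linarith
qed

lemma exists_good_colouring:
  assumes "n \<ge> 3"
  shows "\<exists>A B C col. tripartition n A B C \<and> good_colouring A B C col"
proof -
  let ?col = "\<lambda>e. (0::nat) \<in> e"
  have "mono_triangles {0} {1} {2..<n} ?col = {}"
    unfolding mono_triangles_def by auto
  then have "good_colouring {0} {1} {2..<n} ?col"
    unfolding good_colouring_def by simp
  moreover have "tripartition n {0} {1} {2..<n}"
    unfolding tripartition_def using assms by auto
  ultimately show ?thesis
    by blast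
qed

theorem lemma6p1:
  fixes n :: nat
  assumes "n \<ge> 3"
  shows "gamma n \<le> 4 * n - 10"
proof -
  let ?values = "{card (mono_triangles A B C col) | A B C col.
                    tripartition n A B C \<and> good_colouring A B C col}"
  have bound: "x \<le> 4 * n - 10" if "x \<in> ?values" for x
  proof -
    from that obtain A B C col where "x = card (mono_triangles A B C col)"
      and "tripartition n A B C" "good_colouring A B C col"
      by blast
    with card_mono_triangles_bound[of n A B C col] show ?thesis
      by linarith
  qed
  obtain A B C col where "tripartition n A B C" "good_colouring A B C col"
    using exists_good_colouring[OF assms] by blast
  have "finite ?values"
  proof (rule finite_subset)
    show "?values \<subseteq> {..4 * n - 10}"
      using bound by blast
  qed simp
  moreover have "?values \<noteq> {}"
    using \<open>tripartition n A B C\<close> \<open>good_colouring A B C col\<close> by blast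
  ultimately show ?thesis
    unfolding gamma_def by (rule Max.boundedI) (rule bound)
qed

end
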